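(* Let $n\ge 5$. If $x\in\mathrm{Sort}_n(123,321)$, then $\mathrm{ind}_{s_{123,321}(x)}(2)=\mathrm{ind}_{s_{123,321}(x)}(1)-1$, i.e. $2$ immediately precedes $1$ in $s_{123,321}(x)$.
   Context: $\mathrm{ind}_y(a)$ is the position of the value $a$ in $y$. A permutation contains a pattern $p$ if it has a subsequence order-isomorphic to $p$; otherwise it avoids $p$. For a set $T$ of patterns, the map $s_T$ is defined as follows: the entries of the input permutation are read from left to right, with an initially empty stack. At each step, if the input is nonempty and pushing the next input entry onto the stack produces a stack whose contents, read from top to bottom, avoid every pattern in $T$, that entry is pushed; otherwise the top entry of the stack is popped and appended to the output. When the input is exhausted, the remaining stack entries are popped one at a time to the output. Write $s_{\sigma,\tau}=s_{\{\sigma,\tau\}}$ and $s=s_{\{21\}}$ (West's stack-sorting map). $\mathrm{Sort}_n(\sigma,\tau)$ is the set of $x\in S_n$ with $s(s_{\sigma,\tau}(x))=12\cdots n$. *)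

theory Defs
  imports Main
begin

definition is_perm :: "nat \<Rightarrow> nat list \<Rightarrow> bool" where
  "is_perm n x \<longleftrightarrow> distinct x \<and> set x = {1..n}"

definition order_iso :: "nat list \<Rightarrow> nat list \<Rightarrow> bool" where
  "order_iso u p \<longleftrightarrow> length u = length p \<and>
     (\<forall>i < length u. \<forall>j < length u. (u ! i < u ! j \<longleftrightarrow> p ! i < p ! j))"

definition contains :: "nat list \<Rightarrow> nat list \<Rightarrow> bool" where
  "contains w p \<longleftrightarrow> (\<exists>u \<in> set (subseqs w). order_iso u p)"

definition avoids_all :: "nat list set \<Rightarrow> nat list \<Rightarrow> bool" where
  "avoids_all T w \<longleftrightarrow> (\<forall>p \<in> T. \<not> contains w p)"

text \<open>Arguments: pattern set, remaining input,
  stack (head = top of stack), output so far. If the stack is empty, the entry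
  is always pushed (this case never arises when every pattern has length at least 2).\<close>
fun stack_run :: "nat list set \<Rightarrow> nat list \<Rightarrow> nat list \<Rightarrow> nat list \<Rightarrow> nat list" where
  "stack_run T [] stk out = out @ stk"
| "stack_run T (a # inp) [] out = stack_run T inp [a] out"
| "stack_run T (a # inp) (b # stk) out =
     (if avoids_all T (a # b # stk) then stack_run T inp (a # b # stk) out
      else stack_run T (a # inp) stk (out @ [b]))"

definition sT :: "nat list set \<Rightarrow> nat list \<Rightarrow> nat list" where
  "sT T x = stack_run T x [] []"

definition s2 :: "nat list \<Rightarrow> nat list \<Rightarrow> nat list \<Rightarrow> nat list" where
  "s2 \<sigma> \<tau> = sT {\<sigma>, \<tau>}"

definition west :: "nat list \<Rightarrow> nat list" where
  "west = sT {[2,1]}"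

definition Sort :: "nat \<Rightarrow> nat list \<Rightarrow> nat list \<Rightarrow> nat list set" where
  "Sort n \<sigma> \<tau> = {x. is_perm n x \<and> west (s2 \<sigma> \<tau> x) = [1..<n+1]}"

text \<open>Position of value a in y (0-based; only differences are used).\<close>
definition ind :: "nat list \<Rightarrow> nat \<Rightarrow> nat" where
  "ind y a = (THE i. i < length y \<and> y ! i = a)"

end

theory Submission
  imports Defs "HOL-Library.Sublist" "HOL-Library.Multiset"
begin

text \<open>Write \<open>y\<close> for the output of the (123, 321)-machine on \<open>x\<close>. As West's map sorts \<open>y\<close>,
  \<open>y\<close> avoids 231; so once \<open>1\<close> is known not to precede \<open>2\<close>, it comes directly after \<open>2\<close>, since
  an entry between them would exceed 2 and form a 231 with them.

  To rule out \<open>1\<close> before \<open>2\<close>, follow the entry \<open>1\<close> through the machine. If it is popped while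
  input remains then, because the stack avoids 123 and 321 and \<open>1\<close> is its minimum, the stack
  below \<open>1\<close> is \<open>s > t\<close> and the next input \<open>a\<close> exceeds \<open>s\<close>; the machine then outputs \<open>s\<close>, and
  later \<open>a\<close> before \<open>t\<close>: a 231. Otherwise \<open>1\<close> stays on the stack to the end and 123-avoidance
  puts \<open>2\<close> at the bottom, so \<open>y\<close> ends with \<open>2\<close>. The bottom of the stack never moves, so \<open>x\<close>
  starts with \<open>2\<close>, and the first two later entries of \<open>x\<close> exceeding \<open>2\<close> leave the machine in
  increasing order; with the final \<open>2\<close> they form a 231 again.\<close>

lemma contains_iff_subseq: "contains w p \<longleftrightarrow> (\<exists>u. subseq u w \<and> order_iso u p)"
  by (simp add: contains_def Bex_def)

lemma order_iso_length: "order_iso u p \<Longrightarrow> length u = length p"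
  by (simp add: order_iso_def)

lemma avoids_all_if_shorter: "\<forall>p\<in>T. length w < length p \<Longrightarrow> avoids_all T w"
  by (auto simp: avoids_all_def contains_iff_subseq dest!: list_emb_length order_iso_length)

lemma avoids_all_subseq: "avoids_all T w \<Longrightarrow> subseq v w \<Longrightarrow> avoids_all T v"
  by (auto simp: avoids_all_def contains_iff_subseq dest: subseq_order.order_trans)

lemma order_iso_2_iff:
  "order_iso [a, b] [p, q] \<longleftrightarrow> (a < b \<longleftrightarrow> p < q) \<and> (b < a \<longleftrightarrow> q < p)"
  by (auto simp: order_iso_def All_less_Suc numeral_eq_Suc)

lemma order_iso_3_iff:
  "order_iso [a, b, c] [p, q, r] \<longleftrightarrow>
     (a < b \<longleftrightarrow> p < q) \<and> (b < a \<longleftrightarrow> q < p) \<and> (b < c \<longleftrightarrow> q < r) \<and> (c < b \<longleftrightarrow> r < q) \<and>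
     (a < c \<longleftrightarrow> p < r) \<and> (c < a \<longleftrightarrow> r < p)"
  by (auto simp: order_iso_def All_less_Suc numeral_eq_Suc)

lemma contains_pattern_3_iff:
  "contains w [p, q, r] \<longleftrightarrow> (\<exists>a b c. subseq [a, b, c] w \<and> order_iso [a, b, c] [p, q, r])"
proof
  assume "contains w [p, q, r]"
  then obtain u where u: "subseq u w" "order_iso u [p, q, r]"
    by (auto simp: contains_iff_subseq)
  then have "length u = 3"
    by (simp add: order_iso_length)
  then obtain a b c where "u = [a, b, c]"
    by (auto simp: numeral_eq_Suc length_Suc_conv)
  with u show "\<exists>a b c. subseq [a, b, c] w \<and> order_iso [a, b, c] [p, q, r]"
    by blast
qed (auto simp: contains_iff_subseq)

lemma contains_21_iff: "contains w [2,1] \<longleftrightarrow> (\<exists>a b. subseq [a, b] w \<and> a > b)"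
proof
  assume "contains w [2,1]"
  then obtain u where u: "subseq u w" "order_iso u [2,1]"
    by (auto simp: contains_iff_subseq)
  then obtain a b where "u = [a, b]"
    by (auto simp: numeral_eq_Suc length_Suc_conv dest!: order_iso_length)
  with u show "\<exists>a b. subseq [a, b] w \<and> a > b"
    by (auto simp: order_iso_2_iff)
qed (auto simp: contains_iff_subseq order_iso_2_iff)

lemma contains_123_iff: "contains w [1,2,3] \<longleftrightarrow> (\<exists>a b c. subseq [a, b, c] w \<and> a < b \<and> b < c)"
  unfolding contains_pattern_3_iff order_iso_3_iff by simp (metis less_trans less_not_sym)

lemma contains_321_iff: "contains w [3,2,1] \<longleftrightarrow> (\<exists>a b c. subseq [a, b, c] w \<and> a > b \<and> b > c)"
  unfolding contains_pattern_3_iff order_iso_3_iff by simp (metis less_trans less_not_sym)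

lemma contains_231_iff: "contains w [2,3,1] \<longleftrightarrow> (\<exists>a b c. subseq [b, c, a] w \<and> a < b \<and> b < c)"
  unfolding contains_pattern_3_iff order_iso_3_iff by simp (metis less_trans less_not_sym)

lemma contains_231I: "subseq [b, c, a] w \<Longrightarrow> a < b \<Longrightarrow> b < c \<Longrightarrow> contains w [2,3,1]"
  unfolding contains_231_iff by blast

lemma subseq_pairI: "a \<in> set u \<Longrightarrow> c \<in> set w \<Longrightarrow> subseq [a, c] (u @ w)"
  using list_emb_append_mono[of "(=)" "[a]" u "[c]" w] by (simp add: subseq_singleton_left)

lemma subseq_append_last:
  assumes "subseq xs ys" and "ys \<noteq> []" and "last ys \<notin> set xs"
  shows "subseq (xs @ [last ys]) ys"
proof -
  have ys: "ys = butlast ys @ [last ys]"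
    using assms(2) by simp
  with assms(1) obtain xs1 xs2 where xs: "xs = xs1 @ xs2" "subseq xs1 (butlast ys)"
    and "subseq xs2 [last ys]"
    by (metis subseq_appendE)
  then have "set xs2 \<subseteq> {last ys}"
    by (auto elim: list_emb_set)
  with xs(1) assms(3) have "xs2 = []"
    by (cases xs2) auto
  with xs have "subseq (xs @ [last ys]) (butlast ys @ [last ys])"
    by simp
  with ys show ?thesis by simp
qed

lemma sorted_subseq_pair: "sorted xs \<Longrightarrow> subseq [b, a] xs \<Longrightarrow> b \<le> a"
  by (auto dest!: list_emb_ConsD simp: sorted_append subseq_singleton_left)

section \<open>The pattern-avoiding stack machine\<close>

lemma stack_run_append_output:
  "stack_run T inp stk (pre @ out) = pre @ stack_run T inp stk out"
  by (induction T inp stk out rule: stack_run.induct) auto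

lemma stack_run_output: "stack_run T inp stk out = out @ stack_run T inp stk []"
  using stack_run_append_output[of T inp stk out "[]"] by simp

lemma mset_stack_run: "mset (stack_run T inp stk out) = mset (out @ stk @ inp)"
  by (induction T inp stk out rule: stack_run.induct) auto

lemma set_stack_run: "set (stack_run T inp stk out) = set (out @ stk @ inp)"
  by (metis mset_eq_setD mset_stack_run)

lemma is_perm_sT: "is_perm n x \<Longrightarrow> is_perm n (sT T x)"
  unfolding is_perm_def sT_def
  by (metis append_Nil append_Nil2 mset_eq_imp_distinct_iff mset_eq_setD mset_stack_run)

lemma stack_run_subseq_below:
  "c \<in> set q \<Longrightarrow> subseq [a, c] (stack_run T inp (p @ a # q) out)"
proof (induction T inp "p @ a # q" out arbitrary: p rule: stack_run.induct)
  case (1 T out)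
  then show ?case
    using subseq_pairI[of a "out @ p @ [a]" c q] by simp
next
  case (3 T a' inp b stk out)
  show ?case
  proof (cases "avoids_all T (a' # b # stk)")
    case True
    then have "stack_run T (a' # inp) (b # stk) out = stack_run T inp (a' # b # stk) out"
      by simp
    then show ?thesis
      using "3.hyps"(1)[OF True, of "a' # p"] "3.hyps"(3) "3.prems" by simp
  next
    case False
    show ?thesis
    proof (cases p)
      case Nil
      with "3.hyps"(3) have "b = a" "stk = q" by auto
      have "c \<in> set (stack_run T (a' # inp) q [])"
        using "3.prems" by (simp add: set_stack_run)
      then have "subseq [a, c] ((out @ [a]) @ stack_run T (a' # inp) q [])"
        by (intro subseq_pairI) auto
      then show ?thesis
        using Nil False \<open>b = a\<close> \<open>stk = q\<close> stack_run_output[of T _ q "out @ [a]"] by simp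
    next
      case (Cons p0 p')
      with "3.hyps" "3.prems" False show ?thesis by simp
    qed
  qed
qed simp

lemma stack_run_subseq_top: "c \<in> set stk \<Longrightarrow> subseq [a, c] (stack_run T inp (a # stk) out)"
  using stack_run_subseq_below[where p = "[]"] by simp

lemma stack_run_subseq_output:
  "b \<in> set out \<Longrightarrow> c \<in> set (stk @ inp) \<Longrightarrow> subseq [b, c] (stack_run T inp stk out)"
  by (subst stack_run_output) (simp add: subseq_pairI set_stack_run)

lemma last_stack_run:
  assumes "\<forall>p\<in>T. 3 \<le> length p" and "stk \<noteq> []"
  shows "last (stack_run T inp stk out) = last stk"
  using assms
proof (induction T inp stk out rule: stack_run.induct)
  case (3 T a inp b stk out)
  have "avoids_all T [a, b]"
    using "3.prems"(1) by (intro avoids_all_if_shorter) (auto simp: numeral_3_eq_3)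
  with 3 show ?case by (cases stk) auto
qed simp_all

text \<open>One transition of the machine computed by \<^const>\<open>stack_run\<close>; a state is
  (remaining input, stack with its top first, output so far).\<close>

inductive stack_step :: "nat list set \<Rightarrow> nat list \<times> nat list \<times> nat list \<Rightarrow> nat list \<times> nat list \<times> nat list \<Rightarrow> bool"
  for T :: "nat list set" where
  push_empty: "stack_step T (a # inp, [], out) (inp, [a], out)"
| push: "avoids_all T (a # b # stk) \<Longrightarrow> stack_step T (a # inp, b # stk, out) (inp, a # b # stk, out)"
| pop: "\<not> avoids_all T (a # b # stk) \<Longrightarrow> stack_step T (a # inp, b # stk, out) (a # inp, stk, out @ [b])"

lemmas rtranclp_induct3 =
  rtranclp_induct[of _ "(ax, ay, az)" "(bx, by, bz)", split_rule, consumes 1, case_names refl step]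

lemma stack_steps_run:
  "(stack_step T)\<^sup>*\<^sup>* (inp, stk, out) (inp', stk', out') \<Longrightarrow>
     stack_run T inp stk out = stack_run T inp' stk' out'"
proof (induction rule: rtranclp_induct3)
  case (step inp' stk' out' inp'' stk'' out'')
  from step.hyps(2) step.IH show ?case
    by (cases rule: stack_step.cases) auto
qed simp

lemma stack_steps_mset:
  "(stack_step T)\<^sup>*\<^sup>* (inp, stk, out) (inp', stk', out') \<Longrightarrow>
     mset (out' @ stk' @ inp') = mset (out @ stk @ inp)"
  by (metis stack_steps_run mset_stack_run)

lemma stack_steps_avoids:
  assumes "(stack_step T)\<^sup>*\<^sup>* (inp, stk, out) (inp', stk', out')"
    and "\<forall>p\<in>T. 1 < length p" and "avoids_all T stk"
  shows "avoids_all T stk'"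
  using assms
proof (induction rule: rtranclp_induct3)
  case (step inp' stk' out' inp'' stk'' out'')
  from step.hyps(2) step show ?case
    by (cases rule: stack_step.cases) (auto intro: avoids_all_if_shorter avoids_all_subseq)
qed simp

lemma stack_steps_push_one: "\<exists>stk' out'. (stack_step T)\<^sup>*\<^sup>* (a # v, stk, out) (v, stk', out')"
proof (induction stk arbitrary: out)
  case Nil
  then show ?case using push_empty by blast
next
  case (Cons b stk)
  show ?case
  proof (cases "avoids_all T (a # b # stk)")
    case True
    then show ?thesis using push by blast
  next
    case False
    then have "stack_step T (a # v, b # stk, out) (a # v, stk, out @ [b])" by (rule pop)
    then show ?thesis using Cons[of "out @ [b]"] by (meson converse_rtranclp_into_rtranclp)
  qed
qed

lemma stack_steps_consume: "\<exists>stk' out'. (stack_step T)\<^sup>*\<^sup>* (u @ v, stk, out) (v, stk', out')"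
proof (induction u arbitrary: stk out)
  case (Cons a u)
  obtain stk1 out1 where "(stack_step T)\<^sup>*\<^sup>* (a # u @ v, stk, out) (u @ v, stk1, out1)"
    using stack_steps_push_one by blast
  moreover obtain stk2 out2 where "(stack_step T)\<^sup>*\<^sup>* (u @ v, stk1, out1) (v, stk2, out2)"
    using Cons.IH by blast
  ultimately show ?case by (auto intro: rtranclp_trans)
qed auto

lemma stack_steps_pop_or_finish:
  assumes "m \<notin> set out"
  shows "(\<exists>a inp' S out'. (stack_step T)\<^sup>*\<^sup>* (inp, stk, out) (a # inp', m # S, out') \<and>
            \<not> avoids_all T (a # m # S)) \<or>
         (\<exists>stk' out'. (stack_step T)\<^sup>*\<^sup>* (inp, stk, out) ([], stk', out') \<and> m \<notin> set out')"
  using assms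
proof (induction T inp stk out rule: stack_run.induct)
  case (2 T a inp out)
  then show ?case
    using push_empty[of T a inp out] by (blast intro: converse_rtranclp_into_rtranclp)
next
  case (3 T a inp b stk out)
  show ?case
  proof (cases "avoids_all T (a # b # stk)")
    case True
    from "3.IH"(1)[OF True "3.prems"] show ?thesis
      using push[OF True, of inp out] by (blast intro: converse_rtranclp_into_rtranclp)
  next
    case not_avoids: False
    show ?thesis
    proof (cases "b = m")
      case True
      with not_avoids show ?thesis by blast
    next
      case False
      with "3.prems" have "m \<notin> set (out @ [b])" by simp
      from "3.IH"(2)[OF not_avoids this] show ?thesis
        using pop[OF not_avoids, of inp out] by (blast intro: converse_rtranclp_into_rtranclp)
    qed
  qed
qed blast

section \<open>West-sortable permutations avoid 231\<close>

lemma west_pops_smaller: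
  assumes "b \<in> set stk" and "b < c"
  shows "\<exists>stk' out'. (stack_step {[2,1]})\<^sup>*\<^sup>* (c # w, stk, out) (c # w, stk', out') \<and> b \<in> set out'"
  using assms
proof (induction stk arbitrary: out)
  case (Cons d stk)
  have "subseq [c, b] (c # d # stk)"
    using Cons.prems(1) by (auto simp: subseq_singleton_left)
  with Cons.prems(2) have "contains (c # d # stk) [2,1]"
    unfolding contains_21_iff by blast
  then have "\<not> avoids_all {[2,1]} (c # d # stk)"
    by (simp add: avoids_all_def)
  then have step: "stack_step {[2,1]} (c # w, d # stk, out) (c # w, stk, out @ [d])"
    by (rule pop)
  show ?case
  proof (cases "d = b")
    case True
    with step show ?thesis by (intro exI[of _ stk] exI[of _ "out @ [d]"]) auto
  next
    case False
    with Cons.prems(1) have "b \<in> set stk" by simp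
    from Cons.IH[OF this Cons.prems(2)] obtain stk' out' where
      "(stack_step {[2,1]})\<^sup>*\<^sup>* (c # w, stk, out @ [d]) (c # w, stk', out')" "b \<in> set out'"
      by blast
    with step show ?thesis by (blast intro: converse_rtranclp_into_rtranclp)
  qed
qed simp

lemma west_sorted_avoids_231:
  assumes "sorted (west y)"
  shows "\<not> contains y [2,3,1]"
proof
  assume "contains y [2,3,1]"
  then obtain a b c where bca: "subseq [b, c, a] y" "a < b" "b < c"
    unfolding contains_231_iff by blast
  from list_emb_ConsD[OF bca(1)] obtain u v where y: "y = u @ b # v" and ca: "subseq [c, a] v"
    by blast
  from list_emb_ConsD[OF ca] obtain u' w where v: "v = u' @ c # w" and aw: "a \<in> set w"
    by (auto simp: subseq_singleton_left)
  obtain stk out where steps: "(stack_step {[2,1]})\<^sup>*\<^sup>* ((u @ b # u') @ c # w, [], []) (c # w, stk, out)"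
    using stack_steps_consume by blast
  have "mset (out @ stk @ c # w) = mset ((u @ b # u') @ c # w)"
    using stack_steps_mset[OF steps] by simp
  then have "mset (out @ stk) = mset (u @ b # u')"
    by simp
  then have "b \<in> set out \<or> b \<in> set stk"
    using mset_eq_setD by fastforce
  then obtain stk' out' where
    steps': "(stack_step {[2,1]})\<^sup>*\<^sup>* ((u @ b # u') @ c # w, [], []) (c # w, stk', out')"
    and "b \<in> set out'"
  proof
    assume "b \<in> set stk"
    from west_pops_smaller[OF this \<open>b < c\<close>] obtain stk' out' where
      "(stack_step {[2,1]})\<^sup>*\<^sup>* (c # w, stk, out) (c # w, stk', out')" "b \<in> set out'"
      by blast
    with steps that show ?thesis by (meson rtranclp_trans)
  qed (use steps in blast)
  moreover have "west y = stack_run {[2,1]} (c # w) stk' out'"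
    using stack_steps_run[OF steps'] y v by (simp add: west_def sT_def)
  ultimately have "subseq [b, a] (west y)"
    using aw by (simp add: stack_run_subseq_output)
  with assms have "b \<le> a" by (rule sorted_subseq_pair)
  with \<open>a < b\<close> show False by simp
qed

section \<open>The machine for 123 and 321\<close>

definition mono3 :: "nat list set" where "mono3 = {[1,2,3], [3,2,1]}"

lemma s2_123_321: "s2 [1,2,3] [3,2,1] = sT mono3"
  by (simp add: s2_def mono3_def)

lemma mono3_patterns_length: "\<forall>p\<in>mono3. 3 \<le> length p"
  by (simp add: mono3_def)

lemma avoids_mono3_iff_contains:
  "avoids_all mono3 w \<longleftrightarrow> \<not> contains w [1,2,3] \<and> \<not> contains w [3,2,1]"
  by (simp add: avoids_all_def mono3_def)

lemma avoids_mono3_iff: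
  "avoids_all mono3 w \<longleftrightarrow> \<not> (\<exists>a b c. subseq [a, b, c] w \<and> (a < b \<and> b < c \<or> a > b \<and> b > c))"
  unfolding avoids_mono3_iff_contains contains_123_iff contains_321_iff by blast

text \<open>On a stack of explicit length, \<open>simp\<close> decides avoidance with this form,
  since \<^const>\<open>subseqs\<close> then evaluates to an explicit list.\<close>

lemma avoids_mono3_iff_subseqs:
  "avoids_all mono3 w \<longleftrightarrow>
     (\<forall>u\<in>set (subseqs w). \<forall>a b c. u = [a, b, c] \<longrightarrow> \<not> (a < b \<and> b < c) \<and> \<not> (b < a \<and> c < b))"
  unfolding avoids_mono3_iff Ball_def in_set_subseqs by blast

lemma avoids_mono3D: "avoids_all mono3 w \<Longrightarrow> subseq [a, b, c] w \<Longrightarrow> \<not> (a < b \<and> b < c) \<and> \<not> (b < a \<and> c < b)"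
  unfolding avoids_mono3_iff by blast

lemma mono3_stack_steps_from_perm:
  assumes "(stack_step mono3)\<^sup>*\<^sup>* (x, [], []) (inp, stk, out)" and "is_perm n x"
  shows "avoids_all mono3 stk" "distinct (out @ stk @ inp)" "set (out @ stk @ inp) = {1..n}"
proof -
  show "avoids_all mono3 stk"
    using stack_steps_avoids[OF assms(1)] mono3_patterns_length
    by (force intro: avoids_all_if_shorter)
  have "mset (out @ stk @ inp) = mset x"
    using stack_steps_mset[OF assms(1)] by simp
  with assms(2) show "distinct (out @ stk @ inp)" "set (out @ stk @ inp) = {1..n}"
    unfolding is_perm_def by (metis mset_eq_imp_distinct_iff, metis mset_eq_setD)
qed

lemma mono3_run_last: "last (sT mono3 (h # xs)) = h"
proof -
  have "sT mono3 (h # xs) = stack_run mono3 xs [h] []"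
    by (simp add: sT_def)
  then show ?thesis
    using last_stack_run[OF mono3_patterns_length, of "[h]" xs "[]"] by simp
qed

lemma mono3_blocked_above_min:
  assumes av: "avoids_all mono3 (m # S)" and blocked: "\<not> avoids_all mono3 (a # m # S)"
    and above: "\<forall>s\<in>set (a # S). m < s" and dist: "distinct (a # S)"
  shows "\<exists>s t. S = [s, t] \<and> t < s \<and> s < a"
proof -
  consider "S = []" | s where "S = [s]" | s t where "S = [s, t]" | s t u R where "S = s # t # u # R"
    by (metis list.exhaust)
  then show ?thesis
  proof cases
    case 1
    with blocked show ?thesis by (simp add: avoids_all_if_shorter mono3_def)
  next
    case 2
    with blocked above show ?thesis
      by (simp add: avoids_mono3_iff_subseqs)
  next
    case (3 s t)
    with av above dist have "t < s"
      using avoids_mono3D[OF av, of m s t] by auto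
    moreover have "s < a"
    proof (rule ccontr)
      assume "\<not> s < a"
      with 3 dist have "a < s" by auto
      with 3 above \<open>t < s\<close> have "avoids_all mono3 (a # m # S)"
        by (simp add: avoids_mono3_iff_subseqs)
      with blocked show False by simp
    qed
    ultimately show ?thesis using 3 by blast
  next
    case (4 s t u R)
    with above dist have "t < s" "u < t"
      using avoids_mono3D[OF av, of m s t] avoids_mono3D[OF av, of m t u] by auto
    with avoids_mono3D[OF av, of s t u] 4 above show ?thesis by simp
  qed
qed

lemma mono3_pop_of_one_gives_231:
  assumes steps: "(stack_step mono3)\<^sup>*\<^sup>* (x, [], []) (a # inp, 1 # S, out)"
    and blocked: "\<not> avoids_all mono3 (a # 1 # S)" and perm: "is_perm n x"
  shows "contains (sT mono3 x) [2,3,1]"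
proof -
  note inv = mono3_stack_steps_from_perm[OF steps perm]
  have "\<forall>s\<in>set (a # S). 1 < s"
  proof
    fix s assume "s \<in> set (a # S)"
    with inv(2,3) have "s \<in> {1..n}" "s \<noteq> 1" by auto
    then show "1 < s" by simp
  qed
  moreover have "distinct (a # S)"
    using inv(2) by auto
  ultimately obtain s t where S: "S = [s, t]" "t < s" "s < a"
    using mono3_blocked_above_min inv(1) blocked by blast
  have "sT mono3 x = stack_run mono3 (a # inp) [1, s, t] out"
    using stack_steps_run[OF steps] S(1) by (simp add: sT_def)
  also have "\<dots> = stack_run mono3 inp [a, t] (out @ [1, s])"
    \<comment> \<open>\<open>1\<close> is popped, then \<open>s\<close> because \<open>a s t\<close> is a 321, then \<open>a\<close> is pushed onto \<open>t\<close>\<close>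
    using blocked S
    by (simp add: avoids_mono3_iff_subseqs)
  also have "\<dots> = (out @ [1, s]) @ stack_run mono3 inp [a, t] []"
    by (rule stack_run_output)
  finally have y: "sT mono3 x = (out @ [1, s]) @ stack_run mono3 inp [a, t] []" .
  have "subseq [a, t] (stack_run mono3 inp [a, t] [])"
    by (simp add: stack_run_subseq_top)
  then have "subseq ([s] @ [a, t]) (sT mono3 x)"
    unfolding y by (intro list_emb_append_mono) (auto simp: subseq_singleton_left)
  then have "subseq [s, a, t] (sT mono3 x)"
    by simp
  from contains_231I[OF this S(2,3)] show ?thesis .
qed

lemma last_eq_two_if_avoids_123:
  assumes "\<not> contains w [1,2,3]" and "subseq [1, 2] w" and "distinct w" and "0 \<notin> set w"
  shows "last w = 2"
proof -
  from list_emb_ConsD[OF assms(2)] obtain u v where w: "w = u @ 1 # v" and "subseq [2] v"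
    by blast
  then obtain v1 v2 where v: "v = v1 @ 2 # v2"
    by (metis split_list subseq_singleton_left)
  have "v2 = []"
  proof (rule ccontr)
    assume "v2 \<noteq> []"
    then obtain c v2' where v2: "v2 = c # v2'"
      by (cases v2) auto
    have "c \<noteq> 0" "c \<noteq> 1" "c \<noteq> 2"
      using assms(3,4) unfolding w v v2 by auto
    then have "2 < c"
      by linarith
    have "subseq [2, c] v"
      unfolding v v2 by (rule subseq_drop_many) simp
    then have "subseq [1, 2, c] w"
      unfolding w by (rule subseq_drop_many[OF subseq_Cons2])
    with \<open>2 < c\<close> have "contains w [1,2,3]"
      unfolding contains_123_iff by (intro exI[of _ 1] exI[of _ 2] exI[of _ c]) simp
    with assms(1) show False ..
  qed
  with w v show ?thesis by simp
qed

lemma mono3_one_kept_gives_last_two: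
  assumes steps: "(stack_step mono3)\<^sup>*\<^sup>* (x, [], []) ([], stk, out)" and kept: "1 \<notin> set out"
    and perm: "is_perm n x" and one_two: "subseq [1, 2] (sT mono3 x)"
  shows "last (sT mono3 x) = 2"
proof -
  note inv = mono3_stack_steps_from_perm[OF steps perm]
  have y: "sT mono3 x = out @ stk"
    using stack_steps_run[OF steps] by (simp add: sT_def)
  from one_two obtain xs1 xs2 where xs: "[1, 2] = xs1 @ xs2" "subseq xs1 out" "subseq xs2 stk"
    unfolding y by (rule subseq_appendE)
  have "xs1 = []"
  proof (cases xs1)
    case (Cons z zs)
    with xs have "1 \<in> set xs1" by (cases zs) auto
    with xs(2) kept show ?thesis by (auto elim: list_emb_set)
  qed
  with xs have "subseq [1, 2] stk" by simp
  moreover have "\<not> contains stk [1,2,3]" "distinct stk" "0 \<notin> set stk"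
    using inv by (auto simp: avoids_mono3_iff_contains)
  ultimately have "last stk = 2"
    using last_eq_two_if_avoids_123 by blast
  moreover have "stk \<noteq> []"
    using \<open>subseq [1, 2] stk\<close> by auto
  ultimately show ?thesis
    using y by simp
qed

lemma two_larger_among_next_three:
  fixes r :: "nat list"
  assumes "distinct (2 # r)" and "0 \<notin> set r" and "3 \<le> length r"
  shows "\<exists>p w e1 e2. r = p @ w \<and> (p = [e1, e2] \<or> p = [1, e1, e2] \<or> p = [e1, 1, e2]) \<and>
           2 < e1 \<and> 2 < e2 \<and> e1 \<noteq> e2"
proof -
  obtain r0 r1 r2 w where r: "r = r0 # r1 # r2 # w"
    using assms(3) by (auto simp: numeral_3_eq_3 Suc_le_length_iff)
  with assms(1) have dist: "distinct [r0, r1, r2]"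
    by simp
  have big: "2 < v" if "v \<in> {r0, r1, r2}" "v \<noteq> 1" for v
  proof -
    from that(1) r have "v \<in> set r" by auto
    with assms(2) have "v \<noteq> 0" by metis
    moreover from \<open>v \<in> set r\<close> assms(1) have "v \<noteq> 2" by auto
    ultimately show ?thesis using that(2) by linarith
  qed
  consider "r0 = 1" | "r1 = 1" | "r0 \<noteq> 1" "r1 \<noteq> 1"
    by blast
  then show ?thesis
  proof cases
    case 1
    with dist big have "2 < r1" "2 < r2" "r1 \<noteq> r2" by auto
    with r 1 show ?thesis
      by (intro exI[of _ "[1, r1, r2]"] exI[of _ w] exI[of _ r1] exI[of _ r2]) simp
  next
    case 2
    with dist big have "2 < r0" "2 < r2" "r0 \<noteq> r2" by auto
    with r 2 show ?thesis
      by (intro exI[of _ "[r0, 1, r2]"] exI[of _ w] exI[of _ r0] exI[of _ r2]) simp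
  next
    case 3
    with dist big have "2 < r0" "2 < r1" "r0 \<noteq> r1" by auto
    with r show ?thesis
      by (intro exI[of _ "[r0, r1]"] exI[of _ "r2 # w"] exI[of _ r0] exI[of _ r1]) simp
  qed
qed

text \<open>If \<open>e1 < e2\<close>, the stack \<open>e2 e1 2\<close> would be a 321, so \<open>e1\<close> leaves before \<open>e2\<close> is pushed;
  if \<open>e2 < e1\<close>, then \<open>e2\<close> is pushed on top of \<open>e1\<close>.\<close>

lemma mono3_increasing_pair_after_two:
  assumes p: "p = [e1, e2] \<or> p = [1, e1, e2] \<or> p = [e1, 1, e2]"
    and e: "2 < e1" "2 < e2" "e1 \<noteq> e2"
  shows "\<exists>b c. subseq [b, c] (sT mono3 (2 # p @ w)) \<and> 2 < b \<and> b < c"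
proof (cases "e1 < e2")
  case True
  from p have "subseq [e1, e2] (sT mono3 (2 # p @ w))"
    using e True
    by (elim disjE) (simp_all add: sT_def avoids_mono3_iff_subseqs stack_run_subseq_output)
  with e True show ?thesis by blast
next
  case False
  with e have "e2 < e1" by simp
  from p have "subseq [e2, e1] (sT mono3 (2 # p @ w))"
    using e \<open>e2 < e1\<close>
    by (elim disjE) (simp_all add: sT_def avoids_mono3_iff_subseqs stack_run_subseq_top)
  with e \<open>e2 < e1\<close> show ?thesis by blast
qed

lemma mono3_last_two_gives_231:
  assumes perm: "is_perm n x" and n: "4 \<le> n" and last: "last (sT mono3 x) = 2"
  shows "contains (sT mono3 x) [2,3,1]"
proof -
  have "length x = n"
    using perm by (metis card_atLeastAtMost diff_Suc_1 distinct_card is_perm_def)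
  with n obtain h r where x: "x = h # r" and "3 \<le> length r"
    by (cases x) auto
  with last mono3_run_last have x: "x = 2 # r"
    by simp
  with perm have "distinct (2 # r)" "0 \<notin> set r"
    unfolding is_perm_def by (metis, metis atLeastAtMost_iff list.set_intros(2) not_one_le_zero)
  with two_larger_among_next_three \<open>3 \<le> length r\<close> obtain p w e1 e2 where
    "r = p @ w" "p = [e1, e2] \<or> p = [1, e1, e2] \<or> p = [e1, 1, e2]" "2 < e1" "2 < e2" "e1 \<noteq> e2"
    by blast
  with x mono3_increasing_pair_after_two obtain b c where
    bc: "subseq [b, c] (sT mono3 x)" "2 < b" "b < c"
    by blast
  then have "subseq ([b, c] @ [last (sT mono3 x)]) (sT mono3 x)"
    using last by (intro subseq_append_last) auto
  with last have "subseq [b, c, 2] (sT mono3 x)"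
    by simp
  with bc show ?thesis
    by (blast intro: contains_231I)
qed

lemma mono3_one_not_before_two:
  assumes perm: "is_perm n x" and n: "4 \<le> n" and avoids: "\<not> contains (sT mono3 x) [2,3,1]"
  shows "\<not> subseq [1, 2] (sT mono3 x)"
proof
  assume one_two: "subseq [1, 2] (sT mono3 x)"
  consider (popped) a inp S out where
      "(stack_step mono3)\<^sup>*\<^sup>* (x, [], []) (a # inp, 1 # S, out)" "\<not> avoids_all mono3 (a # 1 # S)"
    | (kept) stk out where "(stack_step mono3)\<^sup>*\<^sup>* (x, [], []) ([], stk, out)" "1 \<notin> set out"
    using stack_steps_pop_or_finish[where m = 1 and T = mono3 and inp = x and stk = "[]" and out = "[]"]
    by auto
  then show False
  proof cases
    case popped
    with perm avoids show False
      using mono3_pop_of_one_gives_231 by blast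
  next
    case kept
    with perm one_two have "last (sT mono3 x) = 2"
      using mono3_one_kept_gives_last_two by blast
    with perm n avoids show False
      using mono3_last_two_gives_231 by blast
  qed
qed

section \<open>Position of 2 relative to 1\<close>

lemma ind_append_Cons:
  assumes "distinct (u @ a # v)"
  shows "ind (u @ a # v) a = length u"
  unfolding ind_def
proof (rule the_equality)
  fix i
  assume i: "i < length (u @ a # v) \<and> (u @ a # v) ! i = a"
  moreover have "length u < length (u @ a # v)" "(u @ a # v) ! length u = a"
    by simp_all
  ultimately show "i = length u"
    using nth_eq_iff_index_eq[OF assms] by metis
qed (simp add: nth_append)

lemma two_directly_before_one:
  assumes perm: "is_perm n y" and "2 \<le> n"
    and no231: "\<not> contains y [2,3,1]" and not12: "\<not> subseq [1, 2] y"
  shows "ind y 2 + 1 = ind y 1"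
proof -
  from perm have dist: "distinct y" and set: "set y = {1..n}"
    unfolding is_perm_def by simp_all
  have "1 \<in> set y" "2 \<in> set y"
    using set \<open>2 \<le> n\<close> by simp_all
  then obtain u v where y: "y = u @ 2 # v"
    by (meson split_list)
  have "1 \<notin> set u"
  proof
    assume "1 \<in> set u"
    then have "subseq [1, 2] y"
      unfolding y by (rule subseq_pairI) simp
    with not12 show False ..
  qed
  with \<open>1 \<in> set y\<close> obtain c v' where v: "v = c # v'" and "1 \<in> set v"
    unfolding y by (cases v) auto
  have "c = 1"
  proof (rule ccontr)
    assume "c \<noteq> 1"
    with \<open>1 \<in> set v\<close> v have "1 \<in> set v'" by simp
    have "c \<in> {1..n}" "c \<noteq> 2"
      using set dist unfolding y v by auto
    with \<open>c \<noteq> 1\<close> have "2 < c" by auto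
    have "subseq [2, c, 1] y"
      unfolding y v using \<open>1 \<in> set v'\<close> by (intro subseq_drop_many) (simp add: subseq_singleton_left)
    from contains_231I[OF this] \<open>2 < c\<close> have "contains y [2,3,1]"
      by simp
    with no231 show False ..
  qed
  with dist show ?thesis
    unfolding y v using ind_append_Cons[of u 2 "1 # v'"] ind_append_Cons[of "u @ [2]" 1 v'] by simp
qed

theorem lemma4p5:
  fixes n :: nat and x :: "nat list"
  assumes "n \<ge> 5" and "x \<in> Sort n [1,2,3] [3,2,1]"
  shows "ind (s2 [1,2,3] [3,2,1] x) 2 + 1 = ind (s2 [1,2,3] [3,2,1] x) 1"
proof -
  have perm: "is_perm n x" and sorted: "west (sT mono3 x) = [1..<n+1]"
    using assms(2) unfolding Sort_def s2_123_321 by auto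
  have no231: "\<not> contains (sT mono3 x) [2,3,1]"
    by (rule west_sorted_avoids_231) (simp only: sorted sorted_upt)
  moreover have "\<not> subseq [1, 2] (sT mono3 x)"
    using perm _ no231 by (rule mono3_one_not_before_two) (use assms(1) in simp)
  moreover have "is_perm n (sT mono3 x)" "2 \<le> n"
    using perm assms(1) by (simp_all add: is_perm_sT)
  ultimately show ?thesis
    unfolding s2_123_321 using two_directly_before_one by blast
qed

end
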